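(* Let $T>0$, $d\ge 1$, $\gamma\in(0,\infty)$, let $f,h,g:[0,T]\to\mathbb{R}$ be continuous functions, and let $\mathbf{m},x_0,x_T\in\mathbb{R}^d$ be fixed vectors. Consider the deterministic optimal control problem $$\min_{\mathbf{u}_{\cdot,\gamma}}\ \int_0^T \tfrac12\|\mathbf{u}_{t,\gamma}\|_2^2\,dt+\tfrac{\gamma}{2}\|\mathbf{x}_T^u-x_T\|_2^2$$ over controls $\mathbf{u}_{\cdot,\gamma}:[0,T]\to\mathbb{R}^d$, subject to the dynamics $$\frac{d\mathbf{x}_t}{dt}=f_t\mathbf{x}_t+h_t\mathbf{m}+g_t\mathbf{u}_{t,\gamma},\qquad \mathbf{x}_0^u=x_0,$$ where $\mathbf{x}^u_t$ denotes the resulting state trajectory. Define $\bar f_{s:t}=\int_s^t f_z\,dz$, $\bar f_t=\bar f_{0:t}$, $\bar h_{s:t}=\int_s^t e^{-\bar f_z}h_z\,dz$, $\bar h_t=\bar h_{0:t}$, $\bar g^2_{s:t}=\int_s^t e^{-2\bar f_z}g_z^2\,dz$, $\bar g^2_t=\bar g^2_{0:t}$, and $d_{t,\gamma}=\gamma^{-1}+e^{2\bar f_T}\bar g^2_{t:T}$. Then the optimal controller, written in terms of the current state $\mathbf{x}_t$ of the optimal trajectory, is $$\mathbf{u}^*_{t,\gamma}=g_t e^{\bar f_{t:T}}\,\frac{x_T-e^{\bar f_{t:T}}\mathbf{x}_t-\mathbf{m}\,e^{\bar f_T}\bar h_{t:T}}{d_{t,\gamma}},$$ and the optimal trajectory is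 given, for all $t\in[0,T]$, by $$\mathbf{x}_t=e^{\bar f_t}\left(\frac{d_{t,\gamma}}{d_{0,\gamma}}x_0+\frac{e^{\bar f_T}\bar g^2_t}{d_{0,\gamma}}x_T+\Big(\bar h_t-\frac{e^{2\bar f_T}\bar h_T\bar g^2_t}{d_{0,\gamma}}\Big)\mathbf{m}\right).$$
   Context: All norms are Euclidean. The quantity $\gamma$ is the terminal penalty coefficient; $x_0$ is the prescribed initial state and $x_T$ the prescribed target terminal point. *)

theory Defs
  imports "HOL-Analysis.Analysis"
begin

definition fbar :: "(real \<Rightarrow> real) \<Rightarrow> real \<Rightarrow> real \<Rightarrow> real" where
  "fbar f s t = integral {s..t} f"

definition hbar :: "(real \<Rightarrow> real) \<Rightarrow> (real \<Rightarrow> real) \<Rightarrow> real \<Rightarrow> real \<Rightarrow> real" where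
  "hbar f h s t = integral {s..t} (\<lambda>z. exp (- fbar f 0 z) * h z)"

definition gbar2 :: "(real \<Rightarrow> real) \<Rightarrow> (real \<Rightarrow> real) \<Rightarrow> real \<Rightarrow> real \<Rightarrow> real" where
  "gbar2 f g s t = integral {s..t} (\<lambda>z. exp (- 2 * fbar f 0 z) * (g z)\<^sup>2)"

definition dgam :: "(real \<Rightarrow> real) \<Rightarrow> (real \<Rightarrow> real) \<Rightarrow> real \<Rightarrow> real \<Rightarrow> real \<Rightarrow> real" where
  "dgam f g T \<gamma> t = inverse \<gamma> + exp (2 * fbar f 0 T) * gbar2 f g t T"

text \<open>Admissible control/trajectory pairs: u square-integrable on [0,T], and x the
 (Caratheodory) solution of dx/dt = f x + h m + g u with x 0 = x0, written in integral form.\<close>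

definition admissible ::
  "(real \<Rightarrow> real) \<Rightarrow> (real \<Rightarrow> real) \<Rightarrow> (real \<Rightarrow> real) \<Rightarrow> 'a::euclidean_space \<Rightarrow> 'a \<Rightarrow> real
   \<Rightarrow> (real \<Rightarrow> 'a) \<Rightarrow> (real \<Rightarrow> 'a) \<Rightarrow> bool" where
  "admissible f h g m x0 T u x \<longleftrightarrow>
     u integrable_on {0..T} \<and> (\<lambda>t. (norm (u t))\<^sup>2) integrable_on {0..T} \<and>
     continuous_on {0..T} x \<and> x 0 = x0 \<and>
     (\<forall>t\<in>{0..T}. (\<lambda>s. f s *\<^sub>R x s + h s *\<^sub>R m + g s *\<^sub>R u s) integrable_on {0..t} \<and>
        x t = x0 + integral {0..t} (\<lambda>s. f s *\<^sub>R x s + h s *\<^sub>R m + g s *\<^sub>R u s))"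

definition cost :: "real \<Rightarrow> 'a::euclidean_space \<Rightarrow> real \<Rightarrow> (real \<Rightarrow> 'a) \<Rightarrow> (real \<Rightarrow> 'a) \<Rightarrow> real" where
  "cost \<gamma> xT T u x = integral {0..T} (\<lambda>t. (norm (u t))\<^sup>2 / 2) + \<gamma> / 2 * (norm (x T - xT))\<^sup>2"

end

theory Submission
  imports Defs
begin

text \<open>
  Along an admissible pair the state equation is linear, and the integrating factor
  e^(-F_t), F = fbar f 0, turns it into the variation-of-constants formula
  x_T = e^(F_T) (x_0 + hbar_T m) + integral_0^T g_s e^(F_T - F_s) u_s ds,
  valid for merely square-integrable controls. So the terminal state is affine in the control
  and the cost is a convex quadratic functional of it. The given controller has the form
  u*_t = g_t e^(F_T - F_t) p with p = gamma (x_T - x*_T): this is exactly the statement that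
  the first variation of the cost at u* vanishes, and by convexity u* is a global minimiser.
  That x* is the trajectory of u* is checked by differentiation; the algebra rests on
  d_t = d_0 - e^(2 F_T) gbar2_t, which also turns the numerator of u* into d_t p.
\<close>

section \<open>Integration by parts against an indefinite integral\<close>

lemma absolutely_integrable_continuous_scaleR:
  fixes c :: "real \<Rightarrow> real" and v :: "real \<Rightarrow> 'a::euclidean_space"
  assumes "continuous_on {a..b} c" and "v absolutely_integrable_on {a..b}"
  shows "(\<lambda>s. c s *\<^sub>R v s) absolutely_integrable_on {a..b}"
proof (rule absolutely_integrable_bounded_measurable_product[where h = "(*\<^sub>R)"])
  show "bilinear ((*\<^sub>R) :: real \<Rightarrow> 'a \<Rightarrow> 'a)"
    by (simp add: bilinear_conv_bounded_bilinear bounded_bilinear_scaleR)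
  show "c \<in> borel_measurable (lebesgue_on {a..b})"
    using assms(1) by (intro continuous_imp_measurable_on_sets_lebesgue) auto
  show "bounded (c ` {a..b})"
    using assms(1) by (intro compact_imp_bounded compact_continuous_image) auto
qed (use assms(2) in auto)

lemma square_integrable_imp_absolutely_integrable:
  fixes u :: "real \<Rightarrow> 'a::euclidean_space"
  assumes "u integrable_on {a..b}" and "(\<lambda>t. (norm (u t))\<^sup>2) integrable_on {a..b}"
  shows "u absolutely_integrable_on {a..b}"
proof (rule measurable_bounded_by_integrable_imp_absolutely_integrable)
  show "u \<in> borel_measurable (lebesgue_on {a..b})"
    using assms(1) by (rule integrable_imp_measurable)
  show "(\<lambda>t. 1 + (norm (u t))\<^sup>2) integrable_on {a..b}"
    using assms(2) by (intro integrable_add integrable_const_ivl)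
  show "norm (u t) \<le> 1 + (norm (u t))\<^sup>2" for t
    using zero_le_power2[of "norm (u t) - 1"] zero_le_power2[of "norm (u t)"]
    unfolding power2_diff power_one mult_1_right by linarith
qed simp

lemma sigma_finite_lebesgue: "sigma_finite_measure (lebesgue :: real measure)"
proof -
  obtain A :: "real set set" where A: "countable A" "A \<subseteq> sets lborel" "\<Union>A = space lborel"
      "\<forall>a\<in>A. emeasure lborel a \<noteq> \<infinity>"
    using lborel.sigma_finite_countable by blast
  have "emeasure lebesgue a = emeasure lborel a" if "a \<in> sets lborel" for a
    using emeasure_completion[OF sets_completionI_sets[OF that]] main_part[OF that] by simp
  with A show ?thesis
    by (intro sigma_finite_measure.intro exI[of _ A]) (auto simp: sets_completionI_sets)
qed

interpretation lebesgue_pair: pair_sigma_finite "lebesgue :: real measure" "lebesgue :: real measure"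
  by (intro pair_sigma_finite.intro sigma_finite_lebesgue)

lemma measurable_fst_snd_lebesgue [measurable]:
  shows "fst \<in> borel_measurable (lebesgue \<Otimes>\<^sub>M (lebesgue :: real measure))"
    and "snd \<in> borel_measurable ((lebesgue :: real measure) \<Otimes>\<^sub>M lebesgue)"
  by (rule measurable_compose[OF measurable_fst] measurable_compose[OF measurable_snd],
      simp add: measurable_completion)+

lemma integrable_triangle_product:
  fixes v :: "real \<Rightarrow> 'a::euclidean_space" and \<phi> :: "real \<Rightarrow> real"
  assumes v: "v absolutely_integrable_on {a..b}" and \<phi>: "\<phi> absolutely_integrable_on {a..b}"
  shows "integrable (lebesgue \<Otimes>\<^sub>M lebesgue)
           (\<lambda>(s, t). indicator {(s, t). a \<le> s \<and> s \<le> t \<and> t \<le> b} (s, t) *\<^sub>R (\<phi> t *\<^sub>R v s))"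
proof -
  define \<Delta> where "\<Delta> = {(s, t). a \<le> s \<and> s \<le> t \<and> t \<le> b}"
  define v' where "v' s = indicator {a..b} s *\<^sub>R v s" for s
  define \<phi>' where "\<phi>' t = indicator {a..b} t *\<^sub>R \<phi> t" for t
  have v': "integrable lebesgue v'" and [measurable]: "v' \<in> borel_measurable lebesgue"
    using v unfolding set_integrable_def v'_def by auto
  have \<phi>': "integrable lebesgue \<phi>'" and [measurable]: "\<phi>' \<in> borel_measurable lebesgue"
    using \<phi> unfolding set_integrable_def \<phi>'_def by auto
  have product: "integrable (lebesgue \<Otimes>\<^sub>M lebesgue) (\<lambda>(s, t). \<phi>' t *\<^sub>R v' s)"
    by (rule lebesgue_pair.Fubini_integrable) (use v' \<phi>' in \<open>auto simp: abs_mult\<close>)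
  have restrict: "(\<lambda>(s, t). indicator \<Delta> (s, t) *\<^sub>R (\<phi> t *\<^sub>R v s))
      = (\<lambda>(s, t). indicator \<Delta> (s, t) *\<^sub>R (\<phi>' t *\<^sub>R v' s))"
    by (auto simp: \<Delta>_def \<phi>'_def v'_def indicator_def fun_eq_iff)
  have "(\<lambda>(s, t). indicator \<Delta> (s, t) *\<^sub>R (\<phi>' t *\<^sub>R v' s))
      \<in> borel_measurable (lebesgue \<Otimes>\<^sub>M lebesgue)"
    unfolding \<Delta>_def by measurable
  then show ?thesis
    unfolding \<Delta>_def[symmetric] restrict
    by (rule Bochner_Integration.integrable_bound[OF product]) (auto intro!: AE_I2 simp: indicator_def)
qed

lemma lebesgue_integral_triangle_sections:
  fixes v :: "real \<Rightarrow> 'a::euclidean_space" and \<psi> :: "real \<Rightarrow> real"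
  assumes v: "v absolutely_integrable_on {a..b}" and \<psi>: "\<psi> absolutely_integrable_on {a..b}"
  defines "F \<equiv> \<lambda>s t. indicator {(s, t). a \<le> s \<and> s \<le> t \<and> t \<le> b} (s, t) *\<^sub>R (\<psi> t *\<^sub>R v s)"
  shows "(LINT t|lebesgue. F s t) = indicator {a..b} s *\<^sub>R (integral {s..b} \<psi> *\<^sub>R v s)"
    and "(LINT s|lebesgue. F s t) = indicator {a..b} t *\<^sub>R (\<psi> t *\<^sub>R integral {a..t} v)"
proof -
  note lebesgue_integral_eq = set_lebesgue_integral_eq_integral(2)[unfolded set_lebesgue_integral_def]
  show "(LINT t|lebesgue. F s t) = indicator {a..b} s *\<^sub>R (integral {s..b} \<psi> *\<^sub>R v s)"
  proof (cases "s \<in> {a..b}")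
    case True
    then have "(\<lambda>t. F s t) = (\<lambda>t. (indicator {s..b} t *\<^sub>R \<psi> t) *\<^sub>R v s)"
      by (auto simp: F_def indicator_def)
    moreover have "\<psi> absolutely_integrable_on {s..b}"
      using absolutely_integrable_on_subinterval[OF \<psi>] True by auto
    ultimately show ?thesis
      using True lebesgue_integral_eq[of "{s..b}" \<psi>] by (simp add: set_integrable_def)
  qed (auto simp: F_def)
  show "(LINT s|lebesgue. F s t) = indicator {a..b} t *\<^sub>R (\<psi> t *\<^sub>R integral {a..t} v)"
  proof (cases "t \<in> {a..b}")
    case True
    then have "(\<lambda>s. F s t) = (\<lambda>s. \<psi> t *\<^sub>R (indicator {a..t} s *\<^sub>R v s))"
      by (auto simp: F_def indicator_def)
    moreover have "v absolutely_integrable_on {a..t}"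
      using absolutely_integrable_on_subinterval[OF v] True by auto
    ultimately show ?thesis
      using True lebesgue_integral_eq[of "{a..t}" v] by (simp del: scaleR_scaleR)
  qed (auto simp: F_def)
qed

lemma integral_triangle_swap:
  fixes v :: "real \<Rightarrow> 'a::euclidean_space" and \<psi> :: "real \<Rightarrow> real"
  assumes v: "v absolutely_integrable_on {a..b}" and \<psi>: "continuous_on {a..b} \<psi>"
  shows "integral {a..b} (\<lambda>s. integral {s..b} \<psi> *\<^sub>R v s)
       = integral {a..b} (\<lambda>t. \<psi> t *\<^sub>R integral {a..t} v)"
proof -
  define F where "F s t = indicator {(s, t). a \<le> s \<and> s \<le> t \<and> t \<le> b} (s, t) *\<^sub>R (\<psi> t *\<^sub>R v s)" for s t
  note lebesgue_integral_eq = set_lebesgue_integral_eq_integral(2)[unfolded set_lebesgue_integral_def]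
  note sections = lebesgue_integral_triangle_sections[OF v absolutely_integrable_continuous_real[OF \<psi>],
      folded F_def]
  have "(\<lambda>s. integral {s..b} \<psi> *\<^sub>R v s) absolutely_integrable_on {a..b}"
    by (intro absolutely_integrable_continuous_scaleR indefinite_integral_continuous_1'
        integrable_continuous_real \<psi> v)
  then have "integral {a..b} (\<lambda>s. integral {s..b} \<psi> *\<^sub>R v s) = (LINT s|lebesgue. LINT t|lebesgue. F s t)"
    unfolding sections by (rule lebesgue_integral_eq[symmetric])
  also have "\<dots> = (LINT t|lebesgue. LINT s|lebesgue. F s t)"
    by (rule lebesgue_pair.Fubini_integral[symmetric])
      (use integrable_triangle_product[OF v absolutely_integrable_continuous_real[OF \<psi>]] in
        \<open>simp add: F_def\<close>)
  also have "\<dots> = integral {a..b} (\<lambda>t. \<psi> t *\<^sub>R integral {a..t} v)"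
    unfolding sections
    by (intro lebesgue_integral_eq absolutely_integrable_continuous_real continuous_on_scaleR \<psi>
        indefinite_integral_continuous_1 set_lebesgue_integral_eq_integral(1) v)
  finally show ?thesis .
qed

lemma integration_by_parts_indefinite_integral:
  fixes v :: "real \<Rightarrow> 'a::euclidean_space" and \<phi> \<psi> :: "real \<Rightarrow> real"
  assumes v: "v absolutely_integrable_on {a..b}" and \<psi>: "continuous_on {a..b} \<psi>"
    and \<phi>: "\<And>t. t \<in> {a..b} \<Longrightarrow> (\<phi> has_real_derivative \<psi> t) (at t within {a..b})"
  shows "integral {a..b} (\<lambda>t. \<psi> t *\<^sub>R integral {a..t} v)
       = \<phi> b *\<^sub>R integral {a..b} v - integral {a..b} (\<lambda>s. \<phi> s *\<^sub>R v s)"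
proof -
  have tail: "integral {s..b} \<psi> = \<phi> b - \<phi> s" if "s \<in> {a..b}" for s
  proof -
    have "(\<psi> has_integral \<phi> b - \<phi> s) {s..b}"
      using that
      by (intro fundamental_theorem_of_calculus)
        (auto intro!: has_field_derivative_subset[OF \<phi>]
          simp: has_real_derivative_iff_has_vector_derivative[symmetric])
    then show ?thesis
      by (rule integral_unique)
  qed
  have "integral {a..b} (\<lambda>t. \<psi> t *\<^sub>R integral {a..t} v) = integral {a..b} (\<lambda>s. (\<phi> b - \<phi> s) *\<^sub>R v s)"
    unfolding integral_triangle_swap[OF v \<psi>, symmetric] by (rule integral_cong) (simp add: tail)
  also have "\<dots> = \<phi> b *\<^sub>R integral {a..b} v - integral {a..b} (\<lambda>s. \<phi> s *\<^sub>R v s)"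
    using integrable_cmul[OF set_lebesgue_integral_eq_integral(1)[OF v], of "\<phi> b"]
      set_lebesgue_integral_eq_integral(1)[OF
        absolutely_integrable_continuous_scaleR[OF DERIV_continuous_on[OF \<phi>] v]]
    by (simp add: scaleR_diff_left integral_diff)
  finally show ?thesis .
qed

section \<open>Variation of constants\<close>

lemma fbar_self [simp]: "fbar \<phi> t t = 0"
  by (simp add: fbar_def)

lemma has_real_derivative_fbar:
  assumes "continuous_on {a..b} \<phi>" and "t \<in> {a..b}"
  shows "(fbar \<phi> a has_real_derivative \<phi> t) (at t within {a..b})"
  unfolding fbar_def by (rule integral_has_real_derivative[OF assms])

lemma continuous_on_fbar:
  assumes "continuous_on {a..b} \<phi>"
  shows "continuous_on {a..b} (fbar \<phi> a)"
  unfolding fbar_def using assms by (intro indefinite_integral_continuous_1 integrable_continuous_real)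

lemma fbar_split:
  assumes "continuous_on {a..b} \<phi>" and "t \<in> {a..b}"
  shows "fbar \<phi> t b = fbar \<phi> a b - fbar \<phi> a t"
  using Henstock_Kurzweil_Integration.integral_combine[where a = a and c = t and b = b and f = \<phi>]
    integrable_continuous_real[OF assms(1)] assms(2)
  unfolding fbar_def by auto

lemma hbar_eq_fbar: "hbar f h = fbar (\<lambda>z. exp (- fbar f 0 z) * h z)"
  by (simp add: fun_eq_iff hbar_def fbar_def)

lemma gbar2_eq_fbar: "gbar2 f g = fbar (\<lambda>z. exp (- 2 * fbar f 0 z) * (g z)\<^sup>2)"
  by (simp add: fun_eq_iff gbar2_def fbar_def)

lemma has_real_derivative_exp_neg_fbar:
  assumes "continuous_on {a..b} \<phi>" and "t \<in> {a..b}"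
  shows "((\<lambda>t. exp (- fbar \<phi> a t)) has_real_derivative - (\<phi> t * exp (- fbar \<phi> a t)))
           (at t within {a..b})"
proof -
  have "((\<lambda>t. exp (- fbar \<phi> a t)) has_real_derivative exp (- fbar \<phi> a t) * - \<phi> t)
          (at t within {a..b})"
    by (intro DERIV_chain2[OF DERIV_exp] derivative_intros has_real_derivative_fbar[OF assms])
  then show ?thesis
    by (simp add: mult.commute)
qed

lemma discounted_indefinite_integral:
  fixes f :: "real \<Rightarrow> real" and w :: "real \<Rightarrow> 'a::euclidean_space"
  assumes "0 \<le> T" and f: "continuous_on {0..T} f" and w: "continuous_on {0..T} w"
  shows "exp (- fbar f 0 T) *\<^sub>R (x0 + integral {0..T} w) - x0
       = integral {0..T} (\<lambda>t. exp (- fbar f 0 t) *\<^sub>R (w t - f t *\<^sub>R (x0 + integral {0..t} w)))"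
proof -
  define \<phi> where "\<phi> t = exp (- fbar f 0 t)" for t
  define z where "z t = x0 + integral {0..t} w" for t
  have "((\<lambda>t. \<phi> t *\<^sub>R z t) has_vector_derivative \<phi> t *\<^sub>R (w t - f t *\<^sub>R z t)) (at t within {0..T})"
    if "t \<in> {0..T}" for t
  proof -
    have "(z has_vector_derivative 0 + w t) (at t within {0..T})"
      unfolding z_def
      by (intro has_vector_derivative_add has_vector_derivative_const integral_has_vector_derivative w that)
    from has_vector_derivative_scaleR[OF has_real_derivative_exp_neg_fbar[OF f that] this]
    show ?thesis
      by (simp add: \<phi>_def algebra_simps)
  qed
  from fundamental_theorem_of_calculus[OF \<open>0 \<le> T\<close> this]
  show ?thesis
    by (simp add: \<phi>_def z_def integral_unique)
qed

lemma variation_of_constants: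
  fixes f :: "real \<Rightarrow> real" and v x :: "real \<Rightarrow> 'a::euclidean_space"
  assumes "0 \<le> T" and f: "continuous_on {0..T} f"
    and v: "v absolutely_integrable_on {0..T}" and x: "continuous_on {0..T} x"
    and x_eq: "\<And>t. t \<in> {0..T} \<Longrightarrow> x t = x0 + integral {0..t} (\<lambda>s. f s *\<^sub>R x s + v s)"
  shows "exp (- fbar f 0 T) *\<^sub>R x T = x0 + integral {0..T} (\<lambda>s. exp (- fbar f 0 s) *\<^sub>R v s)"
proof -
  define \<phi> where "\<phi> t = exp (- fbar f 0 t)" for t
  define V where "V t = integral {0..t} v" for t
  \<comment> \<open>Since v is only integrable, x need not be differentiable: split off the indefinite
    integral V of v, treat the C1 part z by the smooth formula and V by integration by parts.\<close>
  define z where "z t = x0 + integral {0..t} (\<lambda>s. f s *\<^sub>R x s)" for t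
  have fx_cont: "continuous_on {0..T} (\<lambda>s. f s *\<^sub>R x s)"
    by (intro continuous_intros f x)
  have x_split: "x t = z t + V t" if "t \<in> {0..T}" for t
  proof -
    have "(\<lambda>s. f s *\<^sub>R x s) integrable_on {0..t}" and "v integrable_on {0..t}"
      using that integrable_continuous_real[OF fx_cont] set_lebesgue_integral_eq_integral(1)[OF v]
      by (auto intro: integrable_on_subinterval)
    then show ?thesis
      using x_eq[OF that] by (simp add: z_def V_def integral_add)
  qed
  have "\<phi> T *\<^sub>R z T - x0 = integral {0..T} (\<lambda>t. \<phi> t *\<^sub>R (f t *\<^sub>R x t - f t *\<^sub>R z t))"
    using discounted_indefinite_integral[OF \<open>0 \<le> T\<close> f fx_cont] by (simp add: \<phi>_def z_def)
  also have "\<dots> = integral {0..T} (\<lambda>t. (f t * \<phi> t) *\<^sub>R V t)"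
    by (rule integral_cong) (simp add: x_split scaleR_diff_right[symmetric])
  also have "\<dots> = integral {0..T} (\<lambda>s. \<phi> s *\<^sub>R v s) - \<phi> T *\<^sub>R V T"
  proof -
    have \<phi>_deriv: "((\<lambda>t. - \<phi> t) has_real_derivative f t * \<phi> t) (at t within {0..T})"
      if "t \<in> {0..T}" for t
      using DERIV_minus[OF has_real_derivative_exp_neg_fbar[OF f that]] by (simp add: \<phi>_def)
    have "continuous_on {0..T} \<phi>"
      unfolding \<phi>_def by (intro continuous_intros continuous_on_fbar f)
    from integration_by_parts_indefinite_integral[OF v continuous_on_mult[OF f this] \<phi>_deriv]
    show ?thesis
      by (simp add: V_def)
  qed
  finally have "\<phi> T *\<^sub>R z T = x0 + (integral {0..T} (\<lambda>s. \<phi> s *\<^sub>R v s) - \<phi> T *\<^sub>R V T)"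
    by (metis add.commute diff_add_cancel)
  then show ?thesis
    using x_split[of T] \<open>0 \<le> T\<close> by (simp add: \<phi>_def scaleR_add_right)
qed

lemma admissible_discounted_terminal_state:
  fixes f h g :: "real \<Rightarrow> real" and m x0 :: "'a::euclidean_space"
  assumes "0 \<le> T" and f: "continuous_on {0..T} f" and h: "continuous_on {0..T} h"
    and g: "continuous_on {0..T} g" and adm: "admissible f h g m x0 T u x"
  shows "exp (- fbar f 0 T) *\<^sub>R x T
       = x0 + hbar f h 0 T *\<^sub>R m + integral {0..T} (\<lambda>s. (exp (- fbar f 0 s) * g s) *\<^sub>R u s)"
proof -
  define F where "F = fbar f 0"
  have F_cont: "continuous_on {0..T} F"
    unfolding F_def by (rule continuous_on_fbar[OF f])
  have u: "u absolutely_integrable_on {0..T}"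
    using adm by (intro square_integrable_imp_absolutely_integrable) (auto simp: admissible_def)
  have "exp (- F T) *\<^sub>R x T = x0 + integral {0..T} (\<lambda>s. exp (- F s) *\<^sub>R (h s *\<^sub>R m + g s *\<^sub>R u s))"
    unfolding F_def
  proof (rule variation_of_constants[OF \<open>0 \<le> T\<close> f])
    show "(\<lambda>s. h s *\<^sub>R m + g s *\<^sub>R u s) absolutely_integrable_on {0..T}"
      by (intro set_integral_add absolutely_integrable_continuous_real absolutely_integrable_continuous_scaleR
          continuous_intros h g u)
  qed (use adm in \<open>auto simp: admissible_def add.assoc\<close>)
  also have "\<dots> = x0 + hbar f h 0 T *\<^sub>R m + integral {0..T} (\<lambda>s. (exp (- F s) * g s) *\<^sub>R u s)"
  proof -
    have "((\<lambda>s. (exp (- F s) * h s) *\<^sub>R m) has_integral hbar f h 0 T *\<^sub>R m) {0..T}"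
      unfolding hbar_def F_def
      by (intro has_integral_scaleR_left integrable_integral integrable_continuous_real
          continuous_intros F_cont[unfolded F_def] h)
    moreover have "(\<lambda>s. (exp (- F s) * g s) *\<^sub>R u s) integrable_on {0..T}"
      by (intro set_lebesgue_integral_eq_integral(1) absolutely_integrable_continuous_scaleR u
          continuous_intros F_cont g)
    ultimately show ?thesis
      by (simp add: scaleR_add_right integral_add has_integral_integrable integral_unique add.assoc)
  qed
  finally show ?thesis
    unfolding F_def .
qed

lemma admissible_terminal_state:
  fixes f h g :: "real \<Rightarrow> real" and m x0 :: "'a::euclidean_space"
  assumes "0 \<le> T" and "continuous_on {0..T} f" and "continuous_on {0..T} h"
    and "continuous_on {0..T} g" and "admissible f h g m x0 T u x"
  shows "x T = exp (fbar f 0 T) *\<^sub>R (x0 + hbar f h 0 T *\<^sub>R m)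
             + integral {0..T} (\<lambda>s. (g s * exp (fbar f 0 T - fbar f 0 s)) *\<^sub>R u s)"
proof -
  define F where "F = fbar f 0"
  have "x T = exp (F T) *\<^sub>R (exp (- F T) *\<^sub>R x T)"
    by (simp add: exp_minus)
  also have "\<dots> = exp (F T) *\<^sub>R (x0 + hbar f h 0 T *\<^sub>R m)
      + integral {0..T} (\<lambda>s. exp (F T) *\<^sub>R ((exp (- F s) * g s) *\<^sub>R u s))"
    unfolding admissible_discounted_terminal_state[OF assms, folded F_def] integral_cmul
    by (simp add: scaleR_add_right)
  also have "(\<lambda>s. exp (F T) *\<^sub>R ((exp (- F s) * g s) *\<^sub>R u s)) = (\<lambda>s. (g s * exp (F T - F s)) *\<^sub>R u s)"
    by (simp add: exp_diff exp_minus field_simps)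
  finally show ?thesis
    unfolding F_def .
qed

section \<open>Trajectories of exponentially weighted controls\<close>

lemma has_vector_derivative_exponential_trajectory:
  fixes f h g :: "real \<Rightarrow> real" and m x0 c :: "'a::euclidean_space"
  assumes f: "continuous_on {0..T} f" and h: "continuous_on {0..T} h"
    and g: "continuous_on {0..T} g" and t: "t \<in> {0..T}"
  defines "x \<equiv> \<lambda>t. exp (fbar f 0 t) *\<^sub>R (x0 + hbar f h 0 t *\<^sub>R m + gbar2 f g 0 t *\<^sub>R c)"
  shows "(x has_vector_derivative
           f t *\<^sub>R x t + h t *\<^sub>R m + g t *\<^sub>R ((g t * exp (- fbar f 0 t)) *\<^sub>R c)) (at t within {0..T})"
proof -
  define F where "F = fbar f 0"
  have F_cont: "continuous_on {0..T} F"
    unfolding F_def by (rule continuous_on_fbar[OF f])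
  have "(hbar f h 0 has_real_derivative exp (- F t) * h t) (at t within {0..T})"
    unfolding hbar_eq_fbar F_def
    by (intro has_real_derivative_fbar t continuous_intros continuous_on_fbar f h)
  moreover have "(gbar2 f g 0 has_real_derivative exp (- 2 * F t) * (g t)\<^sup>2) (at t within {0..T})"
    unfolding gbar2_eq_fbar F_def
    by (intro has_real_derivative_fbar t continuous_intros continuous_on_fbar f g)
  ultimately have "((\<lambda>t. x0 + hbar f h 0 t *\<^sub>R m + gbar2 f g 0 t *\<^sub>R c) has_vector_derivative
      0 + (exp (- F t) * h t) *\<^sub>R m + (exp (- 2 * F t) * (g t)\<^sup>2) *\<^sub>R c) (at t within {0..T})"
    by (intro has_vector_derivative_add has_vector_derivative_const
        has_vector_derivative_scaleR[where g' = 0, simplified])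
  moreover have "((\<lambda>t. exp (F t)) has_real_derivative exp (F t) * f t) (at t within {0..T})"
    unfolding F_def by (rule DERIV_chain2[OF DERIV_exp has_real_derivative_fbar[OF f t]])
  ultimately have "(x has_vector_derivative
      exp (F t) *\<^sub>R ((exp (- F t) * h t) *\<^sub>R m + (exp (- 2 * F t) * (g t)\<^sup>2) *\<^sub>R c)
      + (exp (F t) * f t) *\<^sub>R (x0 + hbar f h 0 t *\<^sub>R m + gbar2 f g 0 t *\<^sub>R c)) (at t within {0..T})"
    unfolding x_def F_def using has_vector_derivative_scaleR by fastforce
  moreover have "exp (F t) * exp (- 2 * F t) = exp (- F t)"
    by (simp add: exp_add[symmetric])
  ultimately show ?thesis
    by (simp add: x_def F_def scaleR_add_right exp_minus power2_eq_square algebra_simps)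
qed

lemma admissible_classical_solution:
  fixes f h g :: "real \<Rightarrow> real" and m :: "'a::euclidean_space" and u x :: "real \<Rightarrow> 'a"
  assumes u: "continuous_on {0..T} u"
    and x': "\<And>t. t \<in> {0..T} \<Longrightarrow>
               (x has_vector_derivative f t *\<^sub>R x t + h t *\<^sub>R m + g t *\<^sub>R u t) (at t within {0..T})"
  shows "admissible f h g m (x 0) T u x"
proof -
  have solution: "((\<lambda>s. f s *\<^sub>R x s + h s *\<^sub>R m + g s *\<^sub>R u s) has_integral x t - x 0) {0..t}"
    if "t \<in> {0..T}" for t
    using that
    by (intro fundamental_theorem_of_calculus) (auto intro: has_vector_derivative_within_subset[OF x'])
  show ?thesis
    unfolding admissible_def
  proof (intro conjI ballI)
    show "u integrable_on {0..T}"
      by (rule integrable_continuous_real[OF u])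
    show "(\<lambda>t. (norm (u t))\<^sup>2) integrable_on {0..T}"
      by (intro integrable_continuous_real continuous_intros u)
  qed (use solution continuous_on_vector_derivative[OF x'] in \<open>auto simp: has_integral_integrable_integral\<close>)
qed

lemma admissible_exponential_control:
  fixes f h g :: "real \<Rightarrow> real" and m x0 c :: "'a::euclidean_space"
  assumes "0 \<le> T" and f: "continuous_on {0..T} f" and h: "continuous_on {0..T} h"
    and g: "continuous_on {0..T} g"
    and u_eq: "\<And>t. t \<in> {0..T} \<Longrightarrow> u t = (g t * exp (- fbar f 0 t)) *\<^sub>R c"
    and x_eq: "\<And>t. t \<in> {0..T} \<Longrightarrow>
                 x t = exp (fbar f 0 t) *\<^sub>R (x0 + hbar f h 0 t *\<^sub>R m + gbar2 f g 0 t *\<^sub>R c)"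
  shows "admissible f h g m x0 T u x"
proof -
  define X where "X t = exp (fbar f 0 t) *\<^sub>R (x0 + hbar f h 0 t *\<^sub>R m + gbar2 f g 0 t *\<^sub>R c)" for t
  have X_eq: "X t = x t" if "t \<in> {0..T}" for t
    using x_eq[OF that] by (simp add: X_def)
  have "continuous_on {0..T} u"
    by (rule continuous_on_eq[where f = "\<lambda>t. (g t * exp (- fbar f 0 t)) *\<^sub>R c"])
      (auto intro!: continuous_intros continuous_on_fbar f g simp: u_eq)
  moreover have "(x has_vector_derivative f t *\<^sub>R x t + h t *\<^sub>R m + g t *\<^sub>R u t) (at t within {0..T})"
    if "t \<in> {0..T}" for t
  proof -
    have "(X has_vector_derivative f t *\<^sub>R X t + h t *\<^sub>R m + g t *\<^sub>R u t) (at t within {0..T})"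
      using has_vector_derivative_exponential_trajectory[OF f h g that, of x0 m c] u_eq[OF that]
      unfolding X_def by simp
    then show ?thesis
      using has_vector_derivative_transform[OF that X_eq[symmetric]] X_eq[OF that] by simp
  qed
  ultimately have "admissible f h g m (x 0) T u x"
    by (rule admissible_classical_solution)
  moreover have "x 0 = x0"
    using x_eq[of 0] \<open>0 \<le> T\<close> by (simp add: hbar_def gbar2_def)
  ultimately show ?thesis
    by simp
qed

section \<open>Optimality of stationary controls\<close>

lemma power2_norm_ge_tangent:
  fixes p q :: "'a::real_inner"
  shows "(norm q)\<^sup>2 + 2 * (q \<bullet> (p - q)) \<le> (norm p)\<^sup>2"
proof -
  have "0 \<le> (norm (p - q))\<^sup>2"
    by simp
  then show ?thesis
    by (simp add: power2_norm_eq_inner inner_diff_left inner_diff_right inner_commute algebra_simps)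
qed

lemma terminal_cost_ge_tangent:
  fixes y z xT p :: "'a::real_inner"
  assumes "0 < \<gamma>" and "p = \<gamma> *\<^sub>R (xT - y)"
  shows "\<gamma> / 2 * (norm (y - xT))\<^sup>2 - p \<bullet> (z - y) \<le> \<gamma> / 2 * (norm (z - xT))\<^sup>2"
proof -
  have "\<gamma> * ((y - xT) \<bullet> (z - y)) = - (p \<bullet> (z - y))"
    by (simp add: assms(2) inner_diff_left right_diff_distrib)
  moreover have "\<gamma> / 2 * ((norm (y - xT))\<^sup>2 + 2 * ((y - xT) \<bullet> (z - y))) \<le> \<gamma> / 2 * (norm (z - xT))\<^sup>2"
    using power2_norm_ge_tangent[of "y - xT" "z - xT"] assms(1) by (intro mult_left_mono) auto
  ultimately show ?thesis
    by (simp add: distrib_left)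
qed

text \<open>Both cost terms lie above their tangents at us, and the two first-order terms cancel.\<close>

lemma cost_le_if_stationary:
  fixes k :: "real \<Rightarrow> real" and u us x xs :: "real \<Rightarrow> 'a::euclidean_space"
  assumes "0 < \<gamma>" and k: "continuous_on {0..T} k"
    and u: "u integrable_on {0..T}" "(\<lambda>t. (norm (u t))\<^sup>2) integrable_on {0..T}"
    and us: "us integrable_on {0..T}" "(\<lambda>t. (norm (us t))\<^sup>2) integrable_on {0..T}"
    and us_eq: "\<And>t. t \<in> {0..T} \<Longrightarrow> us t = k t *\<^sub>R p"
    and costate: "p = \<gamma> *\<^sub>R (xT - xs T)"
    and reach: "x T - xs T = integral {0..T} (\<lambda>t. k t *\<^sub>R u t) - integral {0..T} (\<lambda>t. k t *\<^sub>R us t)"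
  shows "cost \<gamma> xT T us xs \<le> cost \<gamma> xT T u x"
proof -
  define \<delta> where "\<delta> = p \<bullet> (x T - xs T)"
  have "(\<lambda>t. k t *\<^sub>R w t) integrable_on {0..T}"
    if "w integrable_on {0..T}" "(\<lambda>t. (norm (w t))\<^sup>2) integrable_on {0..T}" for w :: "real \<Rightarrow> 'a"
    using absolutely_integrable_continuous_scaleR[OF k square_integrable_imp_absolutely_integrable[OF that]]
    by (rule set_lebesgue_integral_eq_integral(1))
  then have "((\<lambda>t. k t *\<^sub>R (u t - us t)) has_integral x T - xs T) {0..T}"
    unfolding reach scaleR_diff_right using u us by (intro has_integral_diff integrable_integral)
  from has_integral_linear[OF this bounded_linear_inner_right[of p]]
  have variation: "((\<lambda>t. p \<bullet> (k t *\<^sub>R (u t - us t))) has_integral \<delta>) {0..T}"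
    by (simp add: \<delta>_def o_def)
  have pointwise: "(norm (us t))\<^sup>2 / 2 + p \<bullet> (k t *\<^sub>R (u t - us t)) \<le> (norm (u t))\<^sup>2 / 2"
    if "t \<in> {0..T}" for t
  proof -
    have "us t \<bullet> (u t - us t) = p \<bullet> (k t *\<^sub>R (u t - us t))"
      using us_eq[OF that] by simp
    then show ?thesis
      using power2_norm_ge_tangent[of "us t" "u t"] by linarith
  qed
  have "((\<lambda>t. (norm (us t))\<^sup>2 / 2) has_integral integral {0..T} (\<lambda>t. (norm (us t))\<^sup>2 / 2)) {0..T}"
    and "((\<lambda>t. (norm (u t))\<^sup>2 / 2) has_integral integral {0..T} (\<lambda>t. (norm (u t))\<^sup>2 / 2)) {0..T}"
    by (intro integrable_integral integrable_on_divide u(2) us(2))+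
  from has_integral_le[OF has_integral_add[OF this(1) variation] this(2) pointwise]
  have running:
    "integral {0..T} (\<lambda>t. (norm (us t))\<^sup>2 / 2) + \<delta> \<le> integral {0..T} (\<lambda>t. (norm (u t))\<^sup>2 / 2)"
    by simp
  have terminal: "\<gamma> / 2 * (norm (xs T - xT))\<^sup>2 - \<delta> \<le> \<gamma> / 2 * (norm (x T - xT))\<^sup>2"
    unfolding \<delta>_def by (rule terminal_cost_ge_tangent[OF \<open>0 < \<gamma>\<close> costate])
  show ?thesis
    unfolding cost_def using running terminal by linarith
qed

section \<open>The closed-form solution\<close>

locale closed_form_solution =
  fixes f h g :: "real \<Rightarrow> real" and m x0 xT :: "'a::euclidean_space" and T \<gamma> :: real
    and xs us :: "real \<Rightarrow> 'a"
  assumes T_nonneg: "0 \<le> T" and \<gamma>_pos: "0 < \<gamma>"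
    and f_cont: "continuous_on {0..T} f" and h_cont: "continuous_on {0..T} h"
    and g_cont: "continuous_on {0..T} g"
    and xs_def: "\<And>t. xs t = exp (fbar f 0 t) *\<^sub>R
          ((dgam f g T \<gamma> t / dgam f g T \<gamma> 0) *\<^sub>R x0
           + (exp (fbar f 0 T) * gbar2 f g 0 t / dgam f g T \<gamma> 0) *\<^sub>R xT
           + (hbar f h 0 t - exp (2 * fbar f 0 T) * hbar f h 0 T * gbar2 f g 0 t / dgam f g T \<gamma> 0) *\<^sub>R m)"
    and us_def: "\<And>t. us t = (g t * exp (fbar f t T) / dgam f g T \<gamma> t) *\<^sub>R
          (xT - exp (fbar f t T) *\<^sub>R xs t - (exp (fbar f 0 T) * hbar f h t T) *\<^sub>R m)"
begin

text \<open>The terminal costate: its formula solves the stationarity condition p_eq, in which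
  xs T depends affinely on p.\<close>

definition p :: 'a where
  "p = (1 / dgam f g T \<gamma> 0) *\<^sub>R (xT - exp (fbar f 0 T) *\<^sub>R x0 - (exp (fbar f 0 T) * hbar f h 0 T) *\<^sub>R m)"

lemma continuous_on_fbar_f: "continuous_on {0..T} (fbar f 0)"
  using f_cont by (rule continuous_on_fbar)

lemma gbar2_nonneg:
  assumes "t \<in> {0..T}"
  shows "0 \<le> gbar2 f g t T"
proof -
  have "continuous_on {0..T} (\<lambda>z. exp (- 2 * fbar f 0 z) * (g z)\<^sup>2)"
    by (intro continuous_intros continuous_on_fbar_f g_cont)
  then have "continuous_on {t..T} (\<lambda>z. exp (- 2 * fbar f 0 z) * (g z)\<^sup>2)"
    by (rule continuous_on_subset) (use assms in auto)
  then show ?thesis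
    unfolding gbar2_def by (intro integral_nonneg integrable_continuous_real) auto
qed

lemma dgam_pos: "t \<in> {0..T} \<Longrightarrow> 0 < dgam f g T \<gamma> t"
  using gbar2_nonneg \<gamma>_pos unfolding dgam_def by (simp add: add_pos_nonneg)

lemma dgam_eq:
  assumes "t \<in> {0..T}"
  shows "dgam f g T \<gamma> t = dgam f g T \<gamma> 0 - (exp (fbar f 0 T))\<^sup>2 * gbar2 f g 0 t"
proof -
  have "gbar2 f g t T = gbar2 f g 0 T - gbar2 f g 0 t"
    unfolding gbar2_eq_fbar by (rule fbar_split[OF _ assms]) (intro continuous_intros continuous_on_fbar_f g_cont)
  then show ?thesis
    unfolding dgam_def exp_double by (simp only:) (simp add: algebra_simps)
qed

lemma dgam_T: "dgam f g T \<gamma> T = inverse \<gamma>"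
  by (simp add: dgam_def gbar2_def)

lemma xs_eq:
  assumes "t \<in> {0..T}"
  shows "xs t = exp (fbar f 0 t) *\<^sub>R (x0 + hbar f h 0 t *\<^sub>R m + gbar2 f g 0 t *\<^sub>R (exp (fbar f 0 T) *\<^sub>R p))"
  unfolding xs_def p_def dgam_eq[OF assms] exp_double
  using dgam_pos[of 0] T_nonneg
  by (simp add: diff_divide_distrib scaleR_diff_left scaleR_diff_right algebra_simps power2_eq_square)

text \<open>The numerator of us is the miss distance at time T if the control is switched off at t.\<close>

lemma miss_eq:
  assumes "t \<in> {0..T}"
  shows "xT - exp (fbar f t T) *\<^sub>R xs t - (exp (fbar f 0 T) * hbar f h t T) *\<^sub>R m = dgam f g T \<gamma> t *\<^sub>R p"
proof -
  have "exp (fbar f t T) * exp (fbar f 0 t) = exp (fbar f 0 T)"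
    using fbar_split[OF f_cont assms] by (simp add: exp_diff)
  then have xs_shift: "exp (fbar f t T) *\<^sub>R xs t
      = exp (fbar f 0 T) *\<^sub>R (x0 + hbar f h 0 t *\<^sub>R m + gbar2 f g 0 t *\<^sub>R (exp (fbar f 0 T) *\<^sub>R p))"
    unfolding xs_eq[OF assms] by simp
  have h_split: "hbar f h t T = hbar f h 0 T - hbar f h 0 t"
    unfolding hbar_eq_fbar by (rule fbar_split[OF _ assms]) (intro continuous_intros continuous_on_fbar_f h_cont)
  have xT_eq: "xT = dgam f g T \<gamma> 0 *\<^sub>R p + exp (fbar f 0 T) *\<^sub>R x0 + (exp (fbar f 0 T) * hbar f h 0 T) *\<^sub>R m"
    using dgam_pos[of 0] T_nonneg by (simp add: p_def)
  show ?thesis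
    unfolding dgam_eq[OF assms] xs_shift h_split
    by (subst xT_eq) (simp add: scaleR_diff_left scaleR_diff_right algebra_simps power2_eq_square)
qed

lemma us_eq:
  assumes "t \<in> {0..T}"
  shows "us t = (g t * exp (fbar f 0 T - fbar f 0 t)) *\<^sub>R p"
  unfolding us_def miss_eq[OF assms]
  using dgam_pos[OF assms] fbar_split[OF f_cont assms] by simp

lemma p_eq: "p = \<gamma> *\<^sub>R (xT - xs T)"
  using miss_eq[of T] T_nonneg \<gamma>_pos by (simp add: dgam_T hbar_def)

lemma admissible_xs_us: "admissible f h g m x0 T us xs"
  using T_nonneg f_cont h_cont g_cont
proof (rule admissible_exponential_control[where c = "exp (fbar f 0 T) *\<^sub>R p"])
  show "us t = (g t * exp (- fbar f 0 t)) *\<^sub>R exp (fbar f 0 T) *\<^sub>R p" if "t \<in> {0..T}" for t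
    using us_eq[OF that] by (simp add: exp_diff exp_minus field_simps)
qed (rule xs_eq)

lemma cost_xs_us_le:
  assumes adm: "admissible f h g m x0 T u x"
  shows "cost \<gamma> xT T us xs \<le> cost \<gamma> xT T u x"
proof (rule cost_le_if_stationary[where k = "\<lambda>t. g t * exp (fbar f 0 T - fbar f 0 t)"])
  show "continuous_on {0..T} (\<lambda>t. g t * exp (fbar f 0 T - fbar f 0 t))"
    by (intro continuous_intros g_cont continuous_on_fbar_f)
  show "x T - xs T = integral {0..T} (\<lambda>t. (g t * exp (fbar f 0 T - fbar f 0 t)) *\<^sub>R u t)
      - integral {0..T} (\<lambda>t. (g t * exp (fbar f 0 T - fbar f 0 t)) *\<^sub>R us t)"
    using admissible_terminal_state[OF T_nonneg f_cont h_cont g_cont adm]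
      admissible_terminal_state[OF T_nonneg f_cont h_cont g_cont admissible_xs_us]
    by simp
qed (use adm admissible_xs_us \<gamma>_pos us_eq p_eq in \<open>auto simp: admissible_def\<close>)

end

theorem theorem4p1:
  fixes f h g :: "real \<Rightarrow> real" and m x0 xT :: "real ^ 'd" and T \<gamma> :: real
    and xs us :: "real \<Rightarrow> real ^ 'd"
  assumes "T > 0" and "\<gamma> > 0"
    and "continuous_on {0..T} f" and "continuous_on {0..T} h" and "continuous_on {0..T} g"
    and xs_def: "\<And>t. xs t = exp (fbar f 0 t) *\<^sub>R
          ((dgam f g T \<gamma> t / dgam f g T \<gamma> 0) *\<^sub>R x0
           + (exp (fbar f 0 T) * gbar2 f g 0 t / dgam f g T \<gamma> 0) *\<^sub>R xT
           + (hbar f h 0 t - exp (2 * fbar f 0 T) * hbar f h 0 T * gbar2 f g 0 t / dgam f g T \<gamma> 0) *\<^sub>R m)"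
    and us_def: "\<And>t. us t = (g t * exp (fbar f t T) / dgam f g T \<gamma> t) *\<^sub>R
          (xT - exp (fbar f t T) *\<^sub>R xs t - (exp (fbar f 0 T) * hbar f h t T) *\<^sub>R m)"
  shows "admissible f h g m x0 T us xs \<and>
         (\<forall>u x. admissible f h g m x0 T u x \<longrightarrow> cost \<gamma> xT T us xs \<le> cost \<gamma> xT T u x)"
proof -
  interpret closed_form_solution f h g m x0 xT T \<gamma> xs us
    using assms by unfold_locales auto
  show ?thesis
    using admissible_xs_us cost_xs_us_le by blast
qed

end
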